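(* Let $k,\ell,n\in\mathbb{N}$ (with $k\ge 0$) and let $k'=(2\ell+1)k+\ell$. Then $$H\big(\partial(k,n)\,\big|\,\partial(k',n)\big)\le \mathbb{E}[M(k',n)]\cdot(2\ell+1)^2.$$
   Context: $S$ is simple symmetric random walk on $\mathbb{Z}^2$ started at $0$, $R(n)=\{S(0),\ldots,S(n)\}$. The inner boundary of $A\subset\mathbb{Z}^2$ is $\partial A=\{a\in A: a \text{ is at graph distance } 1 \text{ from some vertex of } \mathbb{Z}^2\setminus A\}$. For $z\in\mathbb{Z}^2$, $k\ge0$: $Q(z,k)=\{z+(j,j'): -k\le j,j'\le k\}$; $\Lambda(k)=\{(2k+1)z: z\in\mathbb{Z}^2\}$. $I(z,k,n)$ is the indicator of $\{\partial R(n)\cap Q(z,k)\ne\emptyset\}$, $M(k,n)=\sum_{z\in\Lambda(k)}I(z,k,n)$, and $\partial(k,n)$ denotes the random vector $(I(z,k,n))_{z\in\Lambda(k)\cap[-2n,2n]^2}$. Entropy: $H(X)=\mathbb{E}[-\log_2 p(X)]$ with $p(x)=\Pr[X=x]$, and conditional entropy $H(X\mid Y)=H(X,Y)-H(Y)$. *)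

theory Defs
  imports "HOL-Probability.Probability" "HOL-Library.FuncSet"
begin

type_synonym pt = "int \<times> int"

definition unit_steps :: "pt set" where
  "unit_steps = {(1,0), (-1,0), (0,1), (0,-1)}"

definition paths :: "nat \<Rightarrow> pt list set" where
  "paths n = {xs. length xs = n \<and> set xs \<subseteq> unit_steps}"

definition walk :: "nat \<Rightarrow> pt list pmf" where
  "walk n = pmf_of_set (paths n)"

definition pos :: "pt list \<Rightarrow> nat \<Rightarrow> pt" where
  "pos xs j = (sum_list (map fst (take j xs)), sum_list (map snd (take j xs)))"

definition rng :: "nat \<Rightarrow> pt list \<Rightarrow> pt set" where
  "rng n xs = pos xs ` {0..n}"

definition inner_bdry :: "pt set \<Rightarrow> pt set" where
  "inner_bdry A = {a \<in> A. \<exists>b. b \<notin> A \<and> \<bar>fst a - fst b\<bar> + \<bar>snd a - snd b\<bar> = 1}"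

definition Qbox :: "pt \<Rightarrow> nat \<Rightarrow> pt set" where
  "Qbox z k = {(fst z + j, snd z + j') | j j'.
      - int k \<le> j \<and> j \<le> int k \<and> - int k \<le> j' \<and> j' \<le> int k}"

definition Lam :: "nat \<Rightarrow> pt set" where
  "Lam k = {((2 * int k + 1) * a, (2 * int k + 1) * b) | a b. True}"

definition Ind :: "pt \<Rightarrow> nat \<Rightarrow> nat \<Rightarrow> pt list \<Rightarrow> bool" where
  "Ind z k n xs \<longleftrightarrow> inner_bdry (rng n xs) \<inter> Qbox z k \<noteq> {}"

text \<open>M(k,n) = sum over z in Lambda(k) of I(z,k,n) (only finitely many nonzero terms).\<close>
definition Mcount :: "nat \<Rightarrow> nat \<Rightarrow> pt list \<Rightarrow> nat" where
  "Mcount k n xs = card {z \<in> Lam k. Ind z k n xs}"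

definition sqbox :: "nat \<Rightarrow> pt set" where
  "sqbox n = {z. \<bar>fst z\<bar> \<le> 2 * int n \<and> \<bar>snd z\<bar> \<le> 2 * int n}"

definition bvec :: "nat \<Rightarrow> nat \<Rightarrow> pt list \<Rightarrow> (pt \<Rightarrow> bool)" where
  "bvec k n xs = restrict (\<lambda>z. Ind z k n xs) (Lam k \<inter> sqbox n)"

definition entropy2 :: "'a pmf \<Rightarrow> ('a \<Rightarrow> 'b) \<Rightarrow> real" where
  "entropy2 p X = (\<Sum>x\<in>set_pmf (map_pmf X p).
      - pmf (map_pmf X p) x * log 2 (pmf (map_pmf X p) x))"

definition cond_entropy2 :: "'a pmf \<Rightarrow> ('a \<Rightarrow> 'b) \<Rightarrow> ('a \<Rightarrow> 'c) \<Rightarrow> real" where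
  "cond_entropy2 p X Y = entropy2 p (\<lambda>\<omega>. (X \<omega>, Y \<omega>)) - entropy2 p Y"

end

theory Submission
  imports Defs
begin

(* Since k' = (2l+1)k + l, every box
   Q(z,k) with z \<in> Lambda(k) lies inside the box Q(t,k') of a "parent" t \<in> Lambda(k'),
   and z is one of the (2l+1)^2 lattice points t + (2k+1)(i,j), |i|,|j| \<le> l (its
   "children").  Hence if the boundary of the range meets Q(z,k), it meets Q(t,k'), so the
   vector partial(k,n) is supported on the children of the M(k',n) boxes marked by
   partial(k',n); given partial(k',n) there are at most 2^((2l+1)^2 M(k',n)) possibilities
   for partial(k,n).  The theorem then follows from the general entropy bound
   H(X | Y) \<le> E[N(Y)] whenever X ranges over at most 2^N(y) values given Y = y, which is
   a consequence of Gibbs' inequality. *)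

lemma expectation_finite_pmf:
  fixes M :: "'a pmf" and f :: "'a \<Rightarrow> real"
  assumes "finite (set_pmf M)"
  shows "measure_pmf.expectation M f = (\<Sum>a\<in>set_pmf M. pmf M a * f a)"
  using integral_measure_pmf_real[OF assms, where f=f] by (simp add: mult.commute)

(* The estimate ln x \<le> x - 1, scaled: the pointwise step of Gibbs' inequality. *)
lemma mult_log2_ratio_le:
  fixes a c :: real
  assumes "a > 0" "c > 0"
  shows "a * log 2 (c / a) \<le> (c - a) / ln 2"
proof -
  have "ln (c / a) \<le> c / a - 1" using assms by (intro ln_le_minus_one) simp
  hence "a * ln (c / a) \<le> a * (c / a - 1)" using assms by (intro mult_left_mono) auto
  also have "\<dots> = c - a" using assms by (simp add: field_simps)
  finally show ?thesis by (simp add: log_def divide_right_mono)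
qed

lemma gibbs_inequality:
  fixes P :: "'a pmf" and g :: "'a \<Rightarrow> real"
  assumes fin: "finite (set_pmf P)"
    and g_pos: "\<And>z. z \<in> set_pmf P \<Longrightarrow> g z > 0"
    and g_sum: "(\<Sum>z\<in>set_pmf P. g z) \<le> 1"
  shows "(\<Sum>z\<in>set_pmf P. pmf P z * - log 2 (pmf P z))
         \<le> (\<Sum>z\<in>set_pmf P. pmf P z * - log 2 (g z))"
proof -
  have pointwise: "pmf P z * - log 2 (pmf P z) - pmf P z * - log 2 (g z) \<le> (g z - pmf P z) / ln 2"
    if z: "z \<in> set_pmf P" for z
  proof -
    have P_pos: "pmf P z > 0" using z by (simp add: pmf_positive)
    have "pmf P z * - log 2 (pmf P z) - pmf P z * - log 2 (g z) = pmf P z * log 2 (g z / pmf P z)"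
      using P_pos g_pos[OF z] by (simp add: log_divide algebra_simps)
    also have "\<dots> \<le> (g z - pmf P z) / ln 2" using mult_log2_ratio_le[OF P_pos g_pos[OF z]] .
    finally show ?thesis .
  qed
  have "(\<Sum>z\<in>set_pmf P. pmf P z * - log 2 (pmf P z)) - (\<Sum>z\<in>set_pmf P. pmf P z * - log 2 (g z))
      \<le> (\<Sum>z\<in>set_pmf P. (g z - pmf P z) / ln 2)"
    unfolding sum_subtractf[symmetric] by (intro sum_mono pointwise)
  also have "\<dots> = ((\<Sum>z\<in>set_pmf P. g z) - 1) / ln 2"
    by (simp add: sum_divide_distrib[symmetric] sum_subtractf sum_pmf_eq_1[OF fin])
  also have "\<dots> \<le> 0" using g_sum by (intro divide_nonpos_pos) auto
  finally show ?thesis by simp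
qed

(* Apply Gibbs' inequality to the law of (X, Y) with weights 2^-N(y) Pr[Y = y]. *)
lemma cond_entropy2_le_expected_log_card:
  fixes p :: "'a pmf" and X :: "'a \<Rightarrow> 'b" and Y :: "'a \<Rightarrow> 'c"
    and S :: "'c \<Rightarrow> 'b set" and N :: "'c \<Rightarrow> real"
  assumes fin: "finite (set_pmf p)"
    and X_in_S: "\<And>\<omega>. \<omega> \<in> set_pmf p \<Longrightarrow> X \<omega> \<in> S (Y \<omega>)"
    and S_fin: "\<And>y. finite (S y)"
    and S_card: "\<And>y. real (card (S y)) \<le> 2 powr N y"
  shows "cond_entropy2 p X Y \<le> measure_pmf.expectation p (\<lambda>\<omega>. N (Y \<omega>))"
proof -
  define J where "J = map_pmf (\<lambda>\<omega>. (X \<omega>, Y \<omega>)) p"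
  define Q where "Q = map_pmf Y p"
  define g :: "'b \<times> 'c \<Rightarrow> real" where "g = (\<lambda>(x, y). 2 powr - N y * pmf Q y)"
  have Q_J: "Q = map_pmf snd J" unfolding J_def Q_def by (simp add: map_pmf_comp)
  have fin_J: "finite (set_pmf J)" and fin_Q: "finite (set_pmf Q)"
    unfolding J_def Q_def using fin by simp_all
  have J_sub: "set_pmf J \<subseteq> prod.swap ` Sigma (set_pmf Q) S"
    unfolding J_def Q_def using X_in_S by (fastforce simp: image_iff)
  have g_pos: "g z > 0" if "z \<in> set_pmf J" for z
  proof -
    have "snd z \<in> set_pmf Q" using that unfolding Q_J by simp
    thus ?thesis unfolding g_def by (simp add: case_prod_beta pmf_positive)
  qed
  have "(\<Sum>z\<in>set_pmf J. g z) \<le> (\<Sum>z\<in>prod.swap ` Sigma (set_pmf Q) S. g z)"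
    using J_sub fin_Q S_fin by (intro sum_mono2) (auto simp: g_def)
  also have "\<dots> = (\<Sum>y\<in>set_pmf Q. \<Sum>x\<in>S y. 2 powr - N y * pmf Q y)"
    using fin_Q S_fin by (simp add: sum.reindex g_def flip: sum.Sigma)
  also have "\<dots> = (\<Sum>y\<in>set_pmf Q. pmf Q y * (real (card (S y)) * 2 powr - N y))"
    by (simp add: mult_ac)
  also have "\<dots> \<le> (\<Sum>y\<in>set_pmf Q. pmf Q y * 1)"
  proof (intro sum_mono mult_left_mono)
    fix y
    have "real (card (S y)) * 2 powr - N y \<le> 2 powr N y * 2 powr - N y"
      using S_card by (intro mult_right_mono) auto
    thus "real (card (S y)) * 2 powr - N y \<le> 1" by (simp add: powr_add[symmetric])
  qed simp
  also have "\<dots> = 1" using sum_pmf_eq_1[OF fin_Q] by simp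
  finally have g_sum: "(\<Sum>z\<in>set_pmf J. g z) \<le> 1" .
  have "entropy2 p (\<lambda>\<omega>. (X \<omega>, Y \<omega>)) = (\<Sum>z\<in>set_pmf J. pmf J z * - log 2 (pmf J z))"
    unfolding entropy2_def J_def by simp
  also have "\<dots> \<le> (\<Sum>z\<in>set_pmf J. pmf J z * - log 2 (g z))"
    by (rule gibbs_inequality[OF fin_J g_pos g_sum])
  also have "\<dots> = measure_pmf.expectation J (\<lambda>(x, y). N y - log 2 (pmf Q y))"
    unfolding expectation_finite_pmf[OF fin_J]
  proof (intro sum.cong refl)
    fix z assume "z \<in> set_pmf J"
    hence "pmf Q (snd z) > 0" unfolding Q_J by (simp add: pmf_positive)
    thus "pmf J z * - log 2 (g z) = pmf J z * (case z of (x, y) \<Rightarrow> N y - log 2 (pmf Q y))"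
      unfolding g_def by (simp add: case_prod_beta log_mult algebra_simps)
  qed
  also have "\<dots> = measure_pmf.expectation p (\<lambda>\<omega>. N (Y \<omega>))
                 + measure_pmf.expectation Q (\<lambda>y. - log 2 (pmf Q y))"
    unfolding J_def Q_def using fin
    by (simp add: case_prod_beta Bochner_Integration.integral_diff integrable_measure_pmf_finite)
  also have "measure_pmf.expectation Q (\<lambda>y. - log 2 (pmf Q y)) = entropy2 p Y"
    unfolding entropy2_def Q_def[symmetric] expectation_finite_pmf[OF fin_Q] by (simp add: sum_negf)
  finally show ?thesis unfolding cond_entropy2_def by simp
qed

lemma Qbox_iff: "b \<in> Qbox z k \<longleftrightarrow> \<bar>fst b - fst z\<bar> \<le> int k \<and> \<bar>snd b - snd z\<bar> \<le> int k"
proof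
  assume "b \<in> Qbox z k"
  thus "\<bar>fst b - fst z\<bar> \<le> int k \<and> \<bar>snd b - snd z\<bar> \<le> int k" unfolding Qbox_def by auto
next
  assume "\<bar>fst b - fst z\<bar> \<le> int k \<and> \<bar>snd b - snd z\<bar> \<le> int k"
  hence "b = (fst z + (fst b - fst z), snd z + (snd b - snd z))
         \<and> - int k \<le> fst b - fst z \<and> fst b - fst z \<le> int k
         \<and> - int k \<le> snd b - snd z \<and> snd b - snd z \<le> int k" by auto
  thus "b \<in> Qbox z k" unfolding Qbox_def by blast
qed

lemma l1_norm_sum_steps:
  "set xs \<subseteq> unit_steps \<Longrightarrow> \<bar>sum_list (map fst xs)\<bar> + \<bar>sum_list (map snd xs)\<bar> \<le> int (length xs)"
proof (induction xs)
  case (Cons x xs)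
  have "\<bar>fst x\<bar> + \<bar>snd x\<bar> \<le> 1" using Cons.prems unfolding unit_steps_def by auto
  with Cons show ?case by simp
qed simp

lemma inner_bdry_walk_bound:
  assumes "xs \<in> paths n" "b \<in> inner_bdry (rng n xs)"
  shows "\<bar>fst b\<bar> \<le> int n \<and> \<bar>snd b\<bar> \<le> int n"
proof -
  obtain j where b: "b = pos xs j" using assms(2) unfolding inner_bdry_def rng_def by blast
  have "set (take j xs) \<subseteq> unit_steps" "length (take j xs) \<le> n"
    using assms(1) set_take_subset unfolding paths_def by fastforce+
  hence "\<bar>fst b\<bar> + \<bar>snd b\<bar> \<le> int n"
    unfolding b pos_def using l1_norm_sum_steps[of "take j xs"] by simp
  thus ?thesis by linarith
qed

(* A point of (2K+1)Z within distance K of a point of [-n,n] lies in [-2n,2n]: a nonzero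
   multiple of 2K+1 is at least 2K+1 in absolute value. *)
lemma lattice_point_near_bounded_point:
  fixes b c :: int and K n :: nat
  assumes "\<bar>b - (2 * int K + 1) * c\<bar> \<le> int K" "\<bar>b\<bar> \<le> int n"
  shows "\<bar>(2 * int K + 1) * c\<bar> \<le> 2 * int n"
proof (cases "c = 0")
  case False
  have "(2 * int K + 1) * 1 \<le> (2 * int K + 1) * \<bar>c\<bar>" using False by (intro mult_left_mono) auto
  hence "2 * int K + 1 \<le> \<bar>(2 * int K + 1) * c\<bar>" by (simp add: abs_mult)
  moreover have "\<bar>(2 * int K + 1) * c\<bar> \<le> int n + int K" using assms by linarith
  ultimately show ?thesis by linarith
qed simp

(* Only boxes centred in [-2n,2n]^2 can meet the boundary of R(n), so the finite vector
   partial(K,n) records every indicator I(t,K,n). *)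
lemma Ind_in_sqbox:
  assumes "xs \<in> paths n" "t \<in> Lam K" "Ind t K n xs"
  shows "t \<in> sqbox n"
proof -
  obtain b where b: "b \<in> inner_bdry (rng n xs)" "b \<in> Qbox t K"
    using assms(3) unfolding Ind_def by auto
  obtain c d where t: "t = ((2 * int K + 1) * c, (2 * int K + 1) * d)"
    using assms(2) unfolding Lam_def by auto
  note bounds = inner_bdry_walk_bound[OF assms(1) b(1)] b(2)[unfolded Qbox_iff t]
  show ?thesis unfolding sqbox_def t
    using lattice_point_near_bounded_point[of "fst b" K c n]
      lattice_point_near_bounded_point[of "snd b" K d n] bounds by simp
qed

lemma balanced_digit:
  fixes a :: int and l :: nat
  obtains c i where "a = (2 * int l + 1) * c + i" "\<bar>i\<bar> \<le> int l"
proof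
  let ?r = "(a + int l) mod (2 * int l + 1)"
  show "a = (2 * int l + 1) * ((a + int l) div (2 * int l + 1)) + (?r - int l)"
    using div_mult_mod_eq[of "a + int l" "2 * int l + 1"] by (simp add: algebra_simps)
  have "0 \<le> ?r" "?r < 2 * int l + 1" by (simp, rule pos_mod_bound) simp
  thus "\<bar>?r - int l\<bar> \<le> int l" by linarith
qed

(* The (2l+1)^2 points of Lambda(k) forming the k-box subdivision of the box around t,
   when t \<in> Lambda((2l+1)k + l). *)
definition children :: "nat \<Rightarrow> nat \<Rightarrow> pt \<Rightarrow> pt set" where
  "children k l t = (\<lambda>(i, j). (fst t + (2 * int k + 1) * i, snd t + (2 * int k + 1) * j))
      ` ({- int l..int l} \<times> {- int l..int l})"

lemma finite_children: "finite (children k l t)"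
  unfolding children_def by simp

lemma card_children: "card (children k l t) \<le> (2 * l + 1)^2"
proof -
  have "card (children k l t) \<le> card ({- int l..int l} \<times> {- int l..int l})"
    unfolding children_def by (rule card_image_le) simp
  also have "\<dots> = (2 * l + 1)^2"
  proof -
    have "card {- int l..int l} = 2 * l + 1" by simp
    thus ?thesis by (simp add: card_cartesian_product power2_eq_square)
  qed
  finally show ?thesis .
qed

lemma parent_box:
  assumes "z \<in> Lam k" "K = (2 * l + 1) * k + l"
  obtains t where "t \<in> Lam K" "z \<in> children k l t" "Qbox z k \<subseteq> Qbox t K"
proof -
  obtain a1 a2 where z: "z = ((2 * int k + 1) * a1, (2 * int k + 1) * a2)"
    using assms(1) unfolding Lam_def by auto
  obtain c1 i1 where a1: "a1 = (2 * int l + 1) * c1 + i1" "\<bar>i1\<bar> \<le> int l" by (rule balanced_digit)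
  obtain c2 i2 where a2: "a2 = (2 * int l + 1) * c2 + i2" "\<bar>i2\<bar> \<le> int l" by (rule balanced_digit)
  have K: "2 * int K + 1 = (2 * int k + 1) * (2 * int l + 1)" "int K = (2 * int k + 1) * int l + int k"
    using assms(2) by (simp_all add: algebra_simps)
  define t where "t = ((2 * int K + 1) * c1, (2 * int K + 1) * c2)"
  have z_t: "z = (fst t + (2 * int k + 1) * i1, snd t + (2 * int k + 1) * i2)"
    unfolding z t_def a1 a2 K by (simp add: algebra_simps)
  have offset: "\<bar>(2 * int k + 1) * i + j\<bar> \<le> int K" if "\<bar>i\<bar> \<le> int l" "\<bar>j\<bar> \<le> int k" for i j :: int
  proof -
    have "\<bar>(2 * int k + 1) * i\<bar> \<le> (2 * int k + 1) * int l"
      using that(1) by (simp add: abs_mult mult_left_mono)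
    thus ?thesis using that(2) unfolding K by linarith
  qed
  show ?thesis
  proof
    show "t \<in> Lam K" unfolding t_def Lam_def by auto
    show "z \<in> children k l t" unfolding children_def using z_t a1(2) a2(2) by force
    show "Qbox z k \<subseteq> Qbox t K"
    proof
      fix b assume "b \<in> Qbox z k"
      hence "\<bar>fst b - fst z\<bar> \<le> int k" "\<bar>snd b - snd z\<bar> \<le> int k" by (simp_all add: Qbox_iff)
      from offset[OF a1(2) this(1)] offset[OF a2(2) this(2)]
      show "b \<in> Qbox t K" unfolding Qbox_iff z_t by (simp add: algebra_simps)
    qed
  qed
qed

definition supported_on :: "'a set \<Rightarrow> 'a set \<Rightarrow> ('a \<Rightarrow> bool) set" where
  "supported_on D A = {x \<in> PiE D (\<lambda>_. UNIV). \<forall>z\<in>D. x z \<longrightarrow> z \<in> A}"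

lemma finite_supported_on: "finite D \<Longrightarrow> finite (supported_on D A)"
  unfolding supported_on_def by (rule finite_subset[of _ "PiE D (\<lambda>_. UNIV)"]) (auto intro: finite_PiE)

(* Such a vector is determined by its true-set, a subset of D \<inter> A. *)
lemma card_supported_on:
  assumes "finite D"
  shows "card (supported_on D A) \<le> 2 ^ card (D \<inter> A)"
proof -
  have "inj_on (\<lambda>x. {z \<in> D. x z}) (supported_on D A)"
  proof (rule inj_onI)
    fix x1 x2 assume x: "x1 \<in> supported_on D A" "x2 \<in> supported_on D A"
      and eq: "{z \<in> D. x1 z} = {z \<in> D. x2 z}"
    show "x1 = x2"
    proof (rule PiE_ext)
      show "x1 \<in> PiE D (\<lambda>_. UNIV)" "x2 \<in> PiE D (\<lambda>_. UNIV)" using x unfolding supported_on_def by auto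
      show "x1 z = x2 z" if "z \<in> D" for z using eq that by blast
    qed
  qed
  moreover have "(\<lambda>x. {z \<in> D. x z}) ` supported_on D A \<subseteq> Pow (D \<inter> A)"
    unfolding supported_on_def by blast
  ultimately have "card (supported_on D A) \<le> card (Pow (D \<inter> A))"
    using assms by (intro card_inj_on_le) auto
  also have "\<dots> = 2 ^ card (D \<inter> A)" using assms by (intro card_Pow) simp
  finally show ?thesis .
qed

definition marked :: "nat \<Rightarrow> nat \<Rightarrow> (pt \<Rightarrow> bool) \<Rightarrow> pt set" where
  "marked K n y = {t \<in> Lam K \<inter> sqbox n. y t}"

lemma finite_sqbox: "finite (sqbox n)"
  by (rule finite_subset[of _ "{-2 * int n..2 * int n} \<times> {-2 * int n..2 * int n}"])
     (auto simp: sqbox_def)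

lemma finite_marked: "finite (marked K n y)"
  unfolding marked_def using finite_sqbox by simp

lemma marked_bvec:
  assumes "xs \<in> paths n"
  shows "marked K n (bvec K n xs) = {t \<in> Lam K. Ind t K n xs}"
  unfolding marked_def bvec_def using Ind_in_sqbox[OF assms] by auto

(* Geometric heart of the proof: partial(k,n) vanishes outside the children of the points
   marked by partial(k',n), since a boundary point in Q(z,k) also lies in the parent box. *)
lemma bvec_supported_on_children:
  assumes "xs \<in> paths n" "K = (2 * l + 1) * k + l"
  shows "bvec k n xs \<in> supported_on (Lam k \<inter> sqbox n) (\<Union>t\<in>marked K n (bvec K n xs). children k l t)"
  unfolding supported_on_def
proof (intro CollectI conjI ballI impI)
  show "bvec k n xs \<in> PiE (Lam k \<inter> sqbox n) (\<lambda>_. UNIV)" unfolding bvec_def by simp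
  fix z assume "z \<in> Lam k \<inter> sqbox n" "bvec k n xs z"
  hence z: "z \<in> Lam k" "Ind z k n xs" unfolding bvec_def by auto
  obtain t where t: "t \<in> Lam K" "z \<in> children k l t" "Qbox z k \<subseteq> Qbox t K"
    using parent_box[OF z(1) assms(2)] .
  have "Ind t K n xs" using z(2) t(3) unfolding Ind_def by blast
  thus "z \<in> (\<Union>t\<in>marked K n (bvec K n xs). children k l t)"
    using t marked_bvec[OF assms(1)] by blast
qed

lemma card_supported_on_children:
  assumes "finite D" "finite T"
  shows "real (card (supported_on D (\<Union>t\<in>T. children k l t))) \<le> 2 powr real ((2 * l + 1)^2 * card T)"
proof -
  have "card (D \<inter> (\<Union>t\<in>T. children k l t)) \<le> card (\<Union>t\<in>T. children k l t)"
    using assms(2) finite_children by (intro card_mono) auto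
  also have "\<dots> \<le> (\<Sum>t\<in>T. card (children k l t))" by (rule card_UN_le[OF assms(2)])
  also have "\<dots> \<le> (\<Sum>t\<in>T. (2 * l + 1)^2)" by (intro sum_mono card_children)
  also have "\<dots> = (2 * l + 1)^2 * card T" by simp
  finally have "card (D \<inter> (\<Union>t\<in>T. children k l t)) \<le> (2 * l + 1)^2 * card T" .
  with card_supported_on[OF assms(1)]
  have "card (supported_on D (\<Union>t\<in>T. children k l t)) \<le> 2 ^ ((2 * l + 1)^2 * card T)"
    by (meson le_trans one_le_numeral power_increasing)
  hence "real (card (supported_on D (\<Union>t\<in>T. children k l t))) \<le> 2 ^ ((2 * l + 1)^2 * card T)"
    by (metis of_nat_le_iff of_nat_numeral of_nat_power)
  also have "\<dots> = 2 powr real ((2 * l + 1)^2 * card T)" by (rule powr_realpow[symmetric]) simp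
  finally show ?thesis .
qed

lemma set_pmf_walk: "set_pmf (walk n) = paths n" and finite_paths: "finite (paths n)"
proof -
  have "finite {xs. set xs \<subseteq> unit_steps \<and> length xs = n}"
    by (rule finite_lists_length_eq) (simp add: unit_steps_def)
  thus fin: "finite (paths n)" unfolding paths_def by (simp add: conj_commute)
  have "replicate n (1, 0) \<in> paths n" unfolding paths_def unit_steps_def by auto
  hence "paths n \<noteq> {}" by blast
  thus "set_pmf (walk n) = paths n" unfolding walk_def using fin by simp
qed

theorem mainTheorem14:
  fixes k l n :: nat
  defines "k' \<equiv> (2 * l + 1) * k + l"
  shows "cond_entropy2 (walk n) (bvec k n) (bvec k' n)
         \<le> measure_pmf.expectation (walk n) (\<lambda>xs. real (Mcount k' n xs)) * (2 * real l + 1)^2"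
proof -
  define S where "S y = supported_on (Lam k \<inter> sqbox n) (\<Union>t\<in>marked k' n y. children k l t)" for y
  define N where "N y = real ((2 * l + 1)^2 * card (marked k' n y))" for y
  have "cond_entropy2 (walk n) (bvec k n) (bvec k' n)
        \<le> measure_pmf.expectation (walk n) (\<lambda>xs. N (bvec k' n xs))"
  proof (rule cond_entropy2_le_expected_log_card)
    show "finite (set_pmf (walk n))" by (simp add: set_pmf_walk finite_paths)
    show "bvec k n xs \<in> S (bvec k' n xs)" if "xs \<in> set_pmf (walk n)" for xs
      unfolding S_def using bvec_supported_on_children that k'_def by (simp add: set_pmf_walk)
    show "finite (S y)" for y unfolding S_def by (intro finite_supported_on) (simp add: finite_sqbox)
    show "real (card (S y)) \<le> 2 powr N y" for y
      unfolding S_def N_def by (intro card_supported_on_children finite_marked) (simp add: finite_sqbox)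
  qed
  also have "\<dots> = measure_pmf.expectation (walk n) (\<lambda>xs. real (Mcount k' n xs) * (2 * real l + 1)^2)"
    by (intro integral_cong_AE)
       (auto simp: AE_measure_pmf_iff set_pmf_walk N_def marked_bvec Mcount_def)
  finally show ?thesis by simp
qed

end
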